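(* For the invertible $N$-component coupled KdV hierarchy (defined in the context), the one-forms $\gamma_s$ are local for all $s\in\mathbf Z$.
   Context: Let $N\ge1$, $\partial=\partial/\partial x$, $\partial^{-1}$ a formal inverse of $\partial$. Let $u_0,\dots,u_{N-1}$ be smooth functions of $(x,t)$, set $u_N=-1$, and let $\varepsilon_1,\dots,\varepsilon_{N-1}$ be real constants, $\varepsilon_0=\varepsilon_N=0$. Put $J_i=\frac14\varepsilon_i\partial^3+\frac12(u_i\partial+\partial u_i)$, so $J_0=\frac12(u_0\partial+\partial u_0)$ and $J_N=-\partial$, both invertible. Formal adjoint: $\partial^\dagger=-\partial$, multiplication operators self-adjoint, $(AB)^\dagger=B^\dagger A^\dagger$, transpose for matrices. Let $R$ be the $N\times N$ matrix operator with $R_{ij}=\delta_{i,j+1}$ ($1\le j\le N-1$) and $R_{iN}=-J_{i-1}J_N^{-1}$; $R$ is invertible. One-forms: $\gamma_0=(0,\dots,0,2)^T$, $\gamma_{-1}=(u_0^{-1/2},0,\dots,0)^T$, and for $s\ge1$, $\gamma_s=(R^\dagger)^s\gamma_0$, $\gamma_{-s}=((R^{-1})^\dagger)^{s-1}\gamma_{-1}$. A one-form is local if each component is a function of $u_0,\dots,u_{N-1}$ and finitely many of their $x$-derivatives (no $\partial^{-1}$ appears). *)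

theory Defs
  imports "HOL-Analysis.Analysis"
begin

text \<open>Jet coordinates: j i k is the value of the k-th x-derivative of u_i.\<close>
type_synonym jet = "nat \<Rightarrow> nat \<Rightarrow> real"

definition smooth_fun :: "(real \<Rightarrow> real) \<Rightarrow> bool" where
  "smooth_fun f \<longleftrightarrow> (\<forall>k x. (deriv ^^ k) f differentiable (at x))"

definition jet_of :: "(nat \<Rightarrow> real \<Rightarrow> real) \<Rightarrow> real \<Rightarrow> jet" where
  "jet_of u x = (\<lambda>i k. (deriv ^^ k) (u i) x)"

definition local_fun :: "nat \<Rightarrow> (jet \<Rightarrow> real) \<Rightarrow> bool" where
  "local_fun N F \<longleftrightarrow> (\<exists>n. \<forall>j j'. (\<forall>i<N. \<forall>k\<le>n. j i k = j' i k) \<longrightarrow> F j = F j')"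

text \<open>Admissible fields: smooth u_0..u_{N-1} with u_0 > 0 (so u_0^(-1/2) is defined).\<close>
definition admissible :: "nat \<Rightarrow> (nat \<Rightarrow> real \<Rightarrow> real) \<Rightarrow> bool" where
  "admissible N u \<longleftrightarrow> (\<forall>i<N. smooth_fun (u i)) \<and> (\<forall>x. u 0 x > 0)"

definition uext :: "nat \<Rightarrow> (nat \<Rightarrow> real \<Rightarrow> real) \<Rightarrow> nat \<Rightarrow> real \<Rightarrow> real" where
  "uext N u i = (if i = N then (\<lambda>x. -1) else u i)"

definition Jop :: "nat \<Rightarrow> (nat \<Rightarrow> real) \<Rightarrow> (nat \<Rightarrow> real \<Rightarrow> real) \<Rightarrow> nat
                    \<Rightarrow> (real \<Rightarrow> real) \<Rightarrow> real \<Rightarrow> real" where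
  "Jop N eps u i f = (\<lambda>x. eps i / 4 * (deriv ^^ 3) f x
      + 1/2 * (uext N u i x * deriv f x + deriv (\<lambda>y. uext N u i y * f y) x))"

text \<open>gamma' = R^dagger gamma (one-forms with components indexed 1..N).
  Since (R^dagger gamma)_i = gamma_{i+1} for i<N and
  (R^dagger gamma)_N = d^{-1} (sum_{j=1}^N J_{j-1} gamma_j), the relation
  gamma' = R^dagger gamma means the following (d^{-1} being a formal inverse of d).\<close>
definition Rdag_rel :: "nat \<Rightarrow> (nat \<Rightarrow> real) \<Rightarrow> (nat \<Rightarrow> real \<Rightarrow> real)
                        \<Rightarrow> (nat \<Rightarrow> real \<Rightarrow> real) \<Rightarrow> (nat \<Rightarrow> real \<Rightarrow> real) \<Rightarrow> bool" where
  "Rdag_rel N eps u g g' \<longleftrightarrow>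
     (\<forall>i\<in>{1..<N}. \<forall>x. g' i x = g (Suc i) x) \<and>
     (\<forall>x. deriv (g' N) x = (\<Sum>j=1..N. Jop N eps u (j - 1) (g j) x))"

end

theory Submission
  imports Defs
begin

text \<open>Write \<open>\<gamma>\<^sub>s\<close> as the window \<open>(a\<^sub>s\<^sub>-\<^sub>N\<^sub>+\<^sub>1, \<dots>, a\<^sub>s)\<close> of a single sequence.
  Then \<open>\<gamma>\<^sub>s\<^sub>+\<^sub>1 = R\<^sup>\<dagger> \<gamma>\<^sub>s\<close> says that the generating series \<open>a(\<lambda>)\<close> is annihilated by
  the operator pencil \<open>J(\<lambda>) = \<Sum>\<^sub>d J\<^sub>N\<^sub>-\<^sub>d \<lambda>\<^sup>d\<close>, and for negative \<open>s\<close> the same holds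
  for the reversed pencil. Each \<open>J\<^sub>d\<close> is of the form \<open>\<epsilon>/4 \<partial>\<^sup>3 + (v\<partial> + \<partial>v)/2\<close>, so \<open>c J\<^sub>d c\<close>
  is a total \<open>x\<close>-derivative, and for every solution of \<open>J(\<lambda>) c(\<lambda>) = 0\<close> the
  \<open>\<lambda>\<close>-coefficients of \<open>\<epsilon>(\<lambda>)/4 (c c'' - c'\<^sup>2/2) + v(\<lambda>) c\<^sup>2/2\<close> are constants.
  Fixing these constants to \<open>(\<kappa>/2, 0, 0, \<dots>)\<close> determines each \<open>c\<^sub>n\<close> algebraically
  from \<open>c\<^sub>0, \<dots>, c\<^sub>n\<^sub>-\<^sub>1\<close>, because \<open>c\<^sub>n\<close> enters the \<open>n\<close>-th coefficient only through
  \<open>v\<^sub>0 c\<^sub>0 c\<^sub>n\<close>: so the \<open>c\<^sub>n\<close> are differential polynomials, hence local. Conversely, since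
  the derivative of the \<open>n\<close>-th coefficient is the \<open>n\<close>-th coefficient of \<open>c(\<lambda>) J(\<lambda>) c(\<lambda>)\<close>
  and \<open>c\<^sub>0 \<noteq> 0\<close>, the series so defined solves \<open>J(\<lambda>) c(\<lambda>) = 0\<close>.\<close>

datatype dexpr =
    DConst real
  | DJet nat nat
  | DInvSqrtPow nat
  | DAdd dexpr dexpr
  | DMult dexpr dexpr

fun dval :: "dexpr \<Rightarrow> jet \<Rightarrow> real" where
  "dval (DConst c) j = c"
| "dval (DJet i k) j = j i k"
| "dval (DInvSqrtPow k) j = (inverse (sqrt (j 0 0))) ^ k"
| "dval (DAdd a b) j = dval a j + dval b j"
| "dval (DMult a b) j = dval a j * dval b j"

abbreviation along :: "(nat \<Rightarrow> real \<Rightarrow> real) \<Rightarrow> dexpr \<Rightarrow> real \<Rightarrow> real" where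
  "along u e \<equiv> \<lambda>x. dval e (jet_of u x)"

fun ddx :: "dexpr \<Rightarrow> dexpr" where
  "ddx (DConst c) = DConst 0"
| "ddx (DJet i k) = DJet i (Suc k)"
| "ddx (DInvSqrtPow k) = DMult (DConst (- real k / 2)) (DMult (DInvSqrtPow (k + 2)) (DJet 0 1))"
| "ddx (DAdd a b) = DAdd (ddx a) (ddx b)"
| "ddx (DMult a b) = DAdd (DMult (ddx a) b) (DMult a (ddx b))"

fun fields_below :: "nat \<Rightarrow> dexpr \<Rightarrow> bool" where
  "fields_below N (DConst c) = True"
| "fields_below N (DJet i k) = (i < N)"
| "fields_below N (DInvSqrtPow k) = (0 < N)"
| "fields_below N (DAdd a b) = (fields_below N a \<and> fields_below N b)"
| "fields_below N (DMult a b) = (fields_below N a \<and> fields_below N b)"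

fun jet_order :: "dexpr \<Rightarrow> nat" where
  "jet_order (DConst c) = 0"
| "jet_order (DJet i k) = k"
| "jet_order (DInvSqrtPow k) = 0"
| "jet_order (DAdd a b) = max (jet_order a) (jet_order b)"
| "jet_order (DMult a b) = max (jet_order a) (jet_order b)"

lemma fields_below_ddx: "fields_below N e \<Longrightarrow> fields_below N (ddx e)"
  by (induction e) auto

lemma fields_below_funpow_ddx: "fields_below N e \<Longrightarrow> fields_below N ((ddx ^^ k) e)"
  by (induction k) (auto simp: fields_below_ddx)

lemma dval_cong_jet:
  "fields_below N e \<Longrightarrow> (\<forall>i<N. \<forall>k\<le>jet_order e. j i k = j' i k) \<Longrightarrow> dval e j = dval e j'"
  by (induction e) auto

lemma jet_of_0 [simp]: "jet_of u x i 0 = u i x"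
  and jet_of_Suc_0 [simp]: "jet_of u x i (Suc 0) = deriv (u i) x"
  by (simp_all add: jet_of_def)

lemma local_fun_dval: "fields_below N e \<Longrightarrow> local_fun N (dval e)"
  unfolding local_fun_def using dval_cong_jet by blast

lemma smooth_fun_has_real_derivative:
  assumes "smooth_fun f"
  shows "((deriv ^^ k) f has_real_derivative (deriv ^^ Suc k) f x) (at x)"
  using assms by (simp add: smooth_fun_def DERIV_deriv_iff_real_differentiable)

lemma has_real_derivative_dval:
  assumes adm: "admissible N u" and "fields_below N e"
  shows "(along u e has_real_derivative along u (ddx e) x) (at x)"
  using assms(2)
proof (induction e)
  case (DJet i k)
  then show ?case
    using smooth_fun_has_real_derivative[of "u i" k x] adm by (simp add: admissible_def jet_of_def)
next
  case (DInvSqrtPow k)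
  have "(u 0 has_real_derivative deriv (u 0) x) (at x)" and "u 0 x > 0"
    using smooth_fun_has_real_derivative[of "u 0" 0 x] DInvSqrtPow adm by (auto simp: admissible_def)
  then have "((\<lambda>x. inverse (sqrt (u 0 x))) has_real_derivative
      - 1/2 * inverse (sqrt (u 0 x)) ^ 3 * deriv (u 0) x) (at x)"
    by (auto intro!: derivative_eq_intros simp: power3_eq_cube divide_simps)
  from DERIV_power[OF this, of k]
  have "((\<lambda>x. inverse (sqrt (u 0 x)) ^ k) has_real_derivative
      of_nat k * (- 1/2 * inverse (sqrt (u 0 x)) ^ 3 * deriv (u 0) x * inverse (sqrt (u 0 x)) ^ (k - Suc 0)))
      (at x)" .
  moreover have "of_nat k * (- 1/2 * w ^ 3 * d * w ^ (k - Suc 0)) = - real k / 2 * (w ^ (k + 2) * d)"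
    for w d :: real
    by (cases k) (simp_all add: power_add power3_eq_cube field_simps)
  ultimately show ?case
    by (simp only: dval.simps ddx.simps jet_of_0 jet_of_Suc_0 One_nat_def)
qed (auto intro!: derivative_eq_intros)

lemma deriv_dval:
  "admissible N u \<Longrightarrow> fields_below N e \<Longrightarrow> deriv (along u e) = along u (ddx e)"
  using has_real_derivative_dval DERIV_imp_deriv by blast

lemma funpow_deriv_dval:
  "admissible N u \<Longrightarrow> fields_below N e \<Longrightarrow> (deriv ^^ k) (along u e) = along u ((ddx ^^ k) e)"
  by (induction k) (auto simp: deriv_dval fields_below_funpow_ddx)

lemma smooth_fun_dval:
  assumes "admissible N u" "fields_below N e"
  shows "smooth_fun (along u e)"
  unfolding smooth_fun_def funpow_deriv_dval[OF assms]
  using has_real_derivative_dval[OF assms(1) fields_below_funpow_ddx[OF assms(2)]]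
    real_differentiable_def by blast

lemma Jop_along:
  assumes adm: "admissible N u" and e: "fields_below N e" and i: "i < N"
  shows "Jop N eps u i (along u e) x =
    eps i / 4 * along u (ddx (ddx (ddx e))) x + 1/2 * (along u (DJet i 0) x * along u (ddx e) x
      + (along u (DJet i (Suc 0)) x * along u e x + along u (DJet i 0) x * along u (ddx e) x))"
proof -
  have "(deriv ^^ 3) (along u e) = along u (ddx (ddx (ddx e)))"
    using funpow_deriv_dval[OF adm e, of 3] by (simp add: numeral_3_eq_3)
  moreover have "deriv (\<lambda>y. u i y * along u e y) = along u (ddx (DMult (DJet i 0) e))"
    using deriv_dval[OF adm, of "DMult (DJet i 0) e"] e i by (simp add: jet_of_def)
  ultimately show ?thesis
    using i deriv_dval[OF adm e] by (simp add: Jop_def uext_def jet_of_def algebra_simps)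
qed

text \<open>For power series \<open>\<epsilon>(\<lambda>) = \<Sum> \<epsilon>\<^sub>d \<lambda>\<^sup>d\<close>, \<open>v(\<lambda>)\<close> and \<open>c(\<lambda>)\<close>,
  \<open>quad_coeff\<close> is the \<open>n\<close>-th coefficient of \<open>\<epsilon>/4 (c c'' - c'\<^sup>2/2) + v c\<^sup>2/2\<close>
  and \<open>J_term\<close> is \<open>J\<^sub>d c\<^sub>q\<close> with \<open>J\<^sub>d = \<epsilon>\<^sub>d/4 \<partial>\<^sup>3 + (v\<^sub>d \<partial> + \<partial> v\<^sub>d)/2\<close>; the arguments
  \<open>c1, c2, c3\<close> and \<open>v1\<close> stand for the \<open>x\<close>-derivatives.\<close>

definition quad_coeff :: "(nat \<Rightarrow> real) \<Rightarrow> (nat \<Rightarrow> real) \<Rightarrow> nat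
    \<Rightarrow> (nat \<Rightarrow> real) \<Rightarrow> (nat \<Rightarrow> real) \<Rightarrow> (nat \<Rightarrow> real) \<Rightarrow> real" where
  "quad_coeff ep v n c c1 c2 = (\<Sum>d\<le>n. \<Sum>p\<le>n-d.
      ep d / 4 * (c p * c2 (n-d-p) - 1/2 * (c1 p * c1 (n-d-p))) + 1/2 * (v d * (c p * c (n-d-p))))"

definition J_term :: "(nat \<Rightarrow> real) \<Rightarrow> (nat \<Rightarrow> real \<Rightarrow> real) \<Rightarrow> (nat \<Rightarrow> real \<Rightarrow> real)
    \<Rightarrow> (nat \<Rightarrow> real \<Rightarrow> real) \<Rightarrow> (nat \<Rightarrow> real \<Rightarrow> real) \<Rightarrow> (nat \<Rightarrow> real \<Rightarrow> real)
    \<Rightarrow> nat \<Rightarrow> nat \<Rightarrow> real \<Rightarrow> real" where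
  "J_term ep v v1 c c1 c3 d q x =
     ep d / 4 * c3 q x + 1/2 * (v d x * c1 q x + (v1 d x * c q x + v d x * c1 q x))"

lemma sum_antidiagonal_antisym:
  fixes h :: "nat \<Rightarrow> nat \<Rightarrow> real"
  assumes "\<And>p q. h p q = - h q p"
  shows "(\<Sum>p\<le>M. h p (M - p)) = 0"
proof -
  have "(\<Sum>p\<le>M. h p (M - p)) = (\<Sum>p\<le>M. h (M - p) p)"
    using sum.atLeastAtMost_rev[of "\<lambda>p. h p (M - p)" 0 M] by (simp add: atMost_atLeast0)
  also have "\<dots> = - (\<Sum>p\<le>M. h p (M - p))"
    by (simp add: assms[of "M - _"] sum_negf)
  finally show ?thesis by simp
qed

lemma sum_triangle_swap:
  "(\<Sum>d\<le>n. \<Sum>p\<le>n-d. G d p) = (\<Sum>p\<le>(n::nat). \<Sum>d\<le>n-p. G d p)"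
proof -
  have "(\<Sum>d\<le>n. \<Sum>p\<le>n-d. G d p) = (\<Sum>(d,p)\<in>Sigma {..n} (\<lambda>d. {..n-d}). G d p)"
    by (simp add: sum.Sigma)
  also have "\<dots> = (\<Sum>(p,d)\<in>Sigma {..n} (\<lambda>p. {..n-p}). G d p)"
    by (rule sum.reindex_bij_witness[where i="\<lambda>(p,d). (d,p)" and j="\<lambda>(d,p). (p,d)"]) auto
  also have "\<dots> = (\<Sum>p\<le>n. \<Sum>d\<le>n-p. G d p)"
    by (simp add: sum.Sigma)
  finally show ?thesis .
qed

text \<open>Only the terms with \<open>d = 0\<close> and \<open>p \<in> {0, n}\<close> involve \<open>c\<^sub>n\<close>, linearly, since \<open>\<epsilon>\<^sub>0 = 0\<close>.\<close>

lemma quad_coeff_split_top: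
  assumes "ep 0 = 0" "n \<ge> 1"
    and "\<And>p. p < n \<Longrightarrow> G p = F p \<and> G1 p = F1 p \<and> G2 p = F2 p"
    and "G n = 0" "G1 n = 0" "G2 n = 0"
  shows "quad_coeff ep v n F F1 F2 = quad_coeff ep v n G G1 G2 + v 0 * F 0 * F n"
proof -
  define t where "t H H1 H2 d p = ep d / 4 * (H p * H2 (n-d-p) - 1/2 * (H1 p * H1 (n-d-p)))
        + 1/2 * (v d * (H p * H (n-d-p)))" for H H1 H2 :: "nat \<Rightarrow> real" and d p
  have Q: "quad_coeff ep v n H H1 H2 = (\<Sum>d\<le>n. \<Sum>p\<le>n-d. t H H1 H2 d p)" for H H1 H2
    by (simp add: quad_coeff_def t_def)
  have split_0: "(\<Sum>d\<le>n. f d) = f 0 + (\<Sum>d\<in>{1..n}. f d)" for f :: "nat \<Rightarrow> real"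
    by (simp add: atMost_atLeast0 sum.atLeast_Suc_atMost)
  have split_ends: "(\<Sum>p\<le>n. h p) = h 0 + (\<Sum>p\<in>{1..<n}. h p) + h n" for h :: "nat \<Rightarrow> real"
  proof -
    have "{..n} = insert 0 (insert n {1..<n})" using assms(2) by auto
    then show ?thesis using assms(2) by (simp add: algebra_simps)
  qed
  have "(\<Sum>d\<in>{1..n}. \<Sum>p\<le>n-d. t F F1 F2 d p) = (\<Sum>d\<in>{1..n}. \<Sum>p\<le>n-d. t G G1 G2 d p)"
    by (intro sum.cong refl) (auto simp: t_def assms(3))
  moreover have "(\<Sum>p\<in>{1..<n}. t F F1 F2 0 p) = (\<Sum>p\<in>{1..<n}. t G G1 G2 0 p)"
    by (intro sum.cong refl) (auto simp: t_def assms(3))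
  moreover have "t F F1 F2 0 0 = t G G1 G2 0 0 + 1/2 * v 0 * F 0 * F n"
    and "t F F1 F2 0 n = t G G1 G2 0 n + 1/2 * v 0 * F 0 * F n"
    using assms by (simp_all add: t_def)
  ultimately show ?thesis
    unfolding Q split_0 by (simp only: diff_zero split_ends)
qed

lemma has_real_derivative_quad_coeff:
  fixes c c1 c2 c3 v v1 :: "nat \<Rightarrow> real \<Rightarrow> real"
  assumes dc: "\<And>p. (c p has_real_derivative c1 p x) (at x)"
    and dc1: "\<And>p. (c1 p has_real_derivative c2 p x) (at x)"
    and dc2: "\<And>p. (c2 p has_real_derivative c3 p x) (at x)"
    and dv: "\<And>d. (v d has_real_derivative v1 d x) (at x)"
  shows "((\<lambda>x. quad_coeff ep (\<lambda>d. v d x) n (\<lambda>p. c p x) (\<lambda>p. c1 p x) (\<lambda>p. c2 p x))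
     has_real_derivative (\<Sum>p\<le>n. c p x * (\<Sum>d\<le>n-p. J_term ep v v1 c c1 c3 d (n-p-d) x))) (at x)"
proof -
  define D where "D d p = ep d / 4 * ((c1 p x * c2 (n-d-p) x + c p x * c3 (n-d-p) x)
       - 1/2 * (c2 p x * c1 (n-d-p) x + c1 p x * c2 (n-d-p) x))
     + 1/2 * (v1 d x * (c p x * c (n-d-p) x) + v d x * (c1 p x * c (n-d-p) x + c p x * c1 (n-d-p) x))"
    for d p
  have der: "((\<lambda>x. quad_coeff ep (\<lambda>d. v d x) n (\<lambda>p. c p x) (\<lambda>p. c1 p x) (\<lambda>p. c2 p x))
      has_real_derivative (\<Sum>d\<le>n. \<Sum>p\<le>n-d. D d p)) (at x)"
  proof -
    have "((\<lambda>x. ep d / 4 * (c p x * c2 (n-d-p) x - 1/2 * (c1 p x * c1 (n-d-p) x))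
        + 1/2 * (v d x * (c p x * c (n-d-p) x))) has_real_derivative D d p) (at x)" for d p
      unfolding D_def
      by (auto intro!: derivative_eq_intros dc dc1 dc2 dv) (simp add: field_simps)
    then show ?thesis
      unfolding quad_coeff_def by (intro DERIV_sum)
  qed
  have inner: "(\<Sum>p\<le>n-d. D d p) = (\<Sum>p\<le>n-d. c p x * J_term ep v v1 c c1 c3 d (n-d-p) x)" for d
  proof -
    define h where "h p q = ep d / 4 * (1/2 * (c1 p x * c2 q x - c2 p x * c1 q x))
       + 1/2 * (v d x * (c1 p x * c q x - c p x * c1 q x))" for p q
    have "(\<Sum>p\<le>n-d. D d p - c p x * J_term ep v v1 c c1 c3 d (n-d-p) x)
        = (\<Sum>p\<le>n-d. h p (n - d - p))"
      by (intro sum.cong refl) (simp add: D_def J_term_def h_def algebra_simps)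
    also have "\<dots> = 0"
      by (rule sum_antidiagonal_antisym) (simp add: h_def algebra_simps)
    finally show ?thesis by (simp add: sum_subtractf)
  qed
  have "(\<Sum>d\<le>n. \<Sum>p\<le>n-d. D d p) = (\<Sum>d\<le>n. \<Sum>p\<le>n-d. c p x * J_term ep v v1 c c1 c3 d (n-d-p) x)"
    by (intro sum.cong refl inner)
  also have "\<dots> = (\<Sum>p\<le>n. \<Sum>d\<le>n-p. c p x * J_term ep v v1 c c1 c3 d (n-d-p) x)"
    by (rule sum_triangle_swap)
  also have "\<dots> = (\<Sum>p\<le>n. c p x * (\<Sum>d\<le>n-p. J_term ep v v1 c c1 c3 d (n-p-d) x))"
    unfolding sum_distrib_left by (intro sum.cong refl) (metis diff_commute)
  finally show ?thesis
    using der by (simp only:)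
qed

lemma convolution_eq_zero_imp_eq_zero:
  fixes c E :: "nat \<Rightarrow> real"
  assumes "\<And>n. (\<Sum>p\<le>n. c p * E (n - p)) = 0" and "c 0 \<noteq> 0"
  shows "E r = 0"
proof (induction r rule: less_induct)
  case (less r)
  have "(\<Sum>p\<le>r. c p * E (r - p)) = c 0 * E r + (\<Sum>p\<in>{1..r}. c p * E (r - p))"
    by (simp add: atMost_atLeast0 sum.atLeast_Suc_atMost)
  also have "(\<Sum>p\<in>{1..r}. c p * E (r - p)) = 0"
    by (rule sum.neutral) (auto simp: less)
  finally show ?case using assms by simp
qed

definition dexpr_sum :: "(nat \<Rightarrow> dexpr) \<Rightarrow> nat \<Rightarrow> dexpr" where
  "dexpr_sum f n = foldr (\<lambda>k acc. DAdd (f k) acc) [0..<Suc n] (DConst 0)"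

lemma dval_dexpr_sum: "dval (dexpr_sum f n) j = (\<Sum>k\<le>n. dval (f k) j)"
proof -
  have "dval (foldr (\<lambda>k acc. DAdd (f k) acc) xs (DConst 0)) j = (\<Sum>k\<leftarrow>xs. dval (f k) j)" for xs
    by (induction xs) auto
  then show ?thesis
    by (simp add: dexpr_sum_def sum_list_distinct_conv_sum_set atLeast0LessThan lessThan_Suc_atMost
        del: upt_Suc)
qed

lemma fields_below_dexpr_sum: "(\<And>k. k \<le> n \<Longrightarrow> fields_below N (f k)) \<Longrightarrow> fields_below N (dexpr_sum f n)"
proof -
  have "(\<forall>k\<in>set xs. fields_below N (f k)) \<Longrightarrow>
      fields_below N (foldr (\<lambda>k acc. DAdd (f k) acc) xs (DConst 0))" for xs
    by (induction xs) auto
  then show "(\<And>k. k \<le> n \<Longrightarrow> fields_below N (f k)) \<Longrightarrow> fields_below N (dexpr_sum f n)"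
    by (simp add: dexpr_sum_def less_Suc_eq_le del: upt_Suc)
qed

definition quad_expr :: "(nat \<Rightarrow> real) \<Rightarrow> (nat \<Rightarrow> dexpr) \<Rightarrow> nat \<Rightarrow> (nat \<Rightarrow> dexpr) \<Rightarrow> dexpr" where
  "quad_expr ep vx n f = dexpr_sum (\<lambda>d. dexpr_sum (\<lambda>p.
      DAdd (DMult (DConst (ep d / 4))
              (DAdd (DMult (f p) (ddx (ddx (f (n-d-p)))))
                    (DMult (DConst (-1/2)) (DMult (ddx (f p)) (ddx (f (n-d-p)))))))
           (DMult (DConst (1/2)) (DMult (vx d) (DMult (f p) (f (n-d-p)))))) (n - d)) n"

lemma dval_quad_expr: "dval (quad_expr ep vx n f) j = quad_coeff ep (\<lambda>d. dval (vx d) j) n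
    (\<lambda>p. dval (f p) j) (\<lambda>p. dval (ddx (f p)) j) (\<lambda>p. dval (ddx (ddx (f p))) j)"
  by (simp add: quad_expr_def dval_dexpr_sum quad_coeff_def)

lemma fields_below_quad_expr:
  "(\<And>d. fields_below N (vx d)) \<Longrightarrow> (\<And>p. fields_below N (f p)) \<Longrightarrow>
    fields_below N (quad_expr ep vx n f)"
  unfolding quad_expr_def by (intro fields_below_dexpr_sum) (simp add: fields_below_ddx)

text \<open>\<open>lenard_prefix n p\<close> is \<open>c\<^sub>p\<close> for \<open>p \<le> n\<close> and \<open>0\<close> beyond; it turns the recursion through
  all earlier coefficients into a primitive one.\<close>

fun lenard_prefix :: "(nat \<Rightarrow> real) \<Rightarrow> (nat \<Rightarrow> dexpr) \<Rightarrow> dexpr \<Rightarrow> dexpr \<Rightarrow> nat \<Rightarrow> nat \<Rightarrow> dexpr"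
  where
  "lenard_prefix ep vx c0 K 0 = (\<lambda>p. if p = 0 then c0 else DConst 0)"
| "lenard_prefix ep vx c0 K (Suc n) = (lenard_prefix ep vx c0 K n)
     (Suc n := DMult K (quad_expr ep vx (Suc n) (lenard_prefix ep vx c0 K n)))"

definition lenard_seq :: "(nat \<Rightarrow> real) \<Rightarrow> (nat \<Rightarrow> dexpr) \<Rightarrow> dexpr \<Rightarrow> dexpr \<Rightarrow> nat \<Rightarrow> dexpr"
  where "lenard_seq ep vx c0 K n = lenard_prefix ep vx c0 K n n"

lemma lenard_prefix_eq:
  "lenard_prefix ep vx c0 K n p = (if p \<le> n then lenard_seq ep vx c0 K p else DConst 0)"
proof (induction n arbitrary: p)
  case (Suc n)
  then show ?case
    by (cases "p = Suc n") (simp_all add: lenard_seq_def[of _ _ _ _ "Suc n"])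
qed (simp add: lenard_seq_def)

lemma lenard_seq_0: "lenard_seq ep vx c0 K 0 = c0"
  by (simp add: lenard_seq_def)

lemma lenard_seq_Suc: "lenard_seq ep vx c0 K (Suc n) = DMult K (quad_expr ep vx (Suc n)
    (\<lambda>p. if p \<le> n then lenard_seq ep vx c0 K p else DConst 0))"
proof -
  have "lenard_seq ep vx c0 K (Suc n) = DMult K (quad_expr ep vx (Suc n) (lenard_prefix ep vx c0 K n))"
    by (simp add: lenard_seq_def)
  then show ?thesis
    by (simp only: lenard_prefix_eq[abs_def])
qed

lemma fields_below_lenard_seq:
  assumes "fields_below N c0" "fields_below N K" "\<And>d. fields_below N (vx d)"
  shows "fields_below N (lenard_seq ep vx c0 K n)"
proof (induction n rule: less_induct)
  case (less n)
  then show ?case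
    using assms by (cases n) (auto simp: lenard_seq_0 lenard_seq_Suc intro!: fields_below_quad_expr)
qed

lemma quad_coeff_lenard_seq:
  assumes "fields_below N c0" "fields_below N K" "\<And>d. fields_below N (vx d)"
    and ep0: "ep 0 = 0"
    and K: "along u K x * along u (vx 0) x * along u c0 x = -1"
    and \<kappa>: "along u (vx 0) x * (along u c0 x)\<^sup>2 = \<kappa>"
  defines "c \<equiv> lenard_seq ep vx c0 K"
  shows "quad_coeff ep (\<lambda>d. along u (vx d) x) n (\<lambda>p. along u (c p) x)
      (\<lambda>p. along u (ddx (c p)) x) (\<lambda>p. along u (ddx (ddx (c p))) x) = (if n = 0 then \<kappa> / 2 else 0)"
proof (cases n)
  case 0
  then show ?thesis
    using \<kappa> ep0 by (simp add: quad_coeff_def c_def lenard_seq_0 power2_eq_square)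
next
  case (Suc m)
  define f where "f p = (if p \<le> m then c p else DConst 0)" for p
  define q where "q = quad_coeff ep (\<lambda>d. along u (vx d) x) n (\<lambda>p. along u (f p) x)
      (\<lambda>p. along u (ddx (f p)) x) (\<lambda>p. along u (ddx (ddx (f p))) x)"
  have cn: "along u (c n) x = along u K x * q"
    unfolding q_def f_def c_def using Suc by (simp add: lenard_seq_Suc dval_quad_expr)
  have "c 0 = c0"
    by (simp add: c_def lenard_seq_0)
  have "quad_coeff ep (\<lambda>d. along u (vx d) x) n (\<lambda>p. along u (c p) x)
      (\<lambda>p. along u (ddx (c p)) x) (\<lambda>p. along u (ddx (ddx (c p))) x)
      = q + along u (vx 0) x * along u (c 0) x * along u (c n) x"
    unfolding q_def by (rule quad_coeff_split_top) (auto simp: ep0 Suc f_def)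
  also have "\<dots> = q * (1 + along u K x * along u (vx 0) x * along u c0 x)"
    by (simp add: cn \<open>c 0 = c0\<close> algebra_simps)
  also have "\<dots> = 0"
    by (simp only: K) simp
  finally show ?thesis using Suc by simp
qed

lemma J_term_convolution_lenard_seq:
  assumes adm: "admissible N u"
    and fb: "fields_below N c0" "fields_below N K" "\<And>d. fields_below N (vx d)"
    and ep0: "ep 0 = 0"
    and c0: "\<And>x. along u c0 x \<noteq> 0"
    and K: "\<And>x. along u K x * along u (vx 0) x * along u c0 x = -1"
    and \<kappa>: "\<And>x. along u (vx 0) x * (along u c0 x)\<^sup>2 = \<kappa>"
  defines "c \<equiv> lenard_seq ep vx c0 K"
  shows "(\<Sum>d\<le>r. J_term ep (\<lambda>d. along u (vx d)) (\<lambda>d. along u (ddx (vx d)))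
      (\<lambda>p. along u (c p)) (\<lambda>p. along u (ddx (c p))) (\<lambda>p. along u (ddx (ddx (ddx (c p)))))
      d (r - d) x) = 0"
proof (rule convolution_eq_zero_imp_eq_zero[where c="\<lambda>p. along u (c p) x"])
  have fbc: "fields_below N (c p)" for p
    unfolding c_def using fields_below_lenard_seq fb by blast
  fix n
  define Q where "Q y = quad_coeff ep (\<lambda>d. along u (vx d) y) n (\<lambda>p. along u (c p) y)
      (\<lambda>p. along u (ddx (c p)) y) (\<lambda>p. along u (ddx (ddx (c p))) y)" for y
  have "(Q has_real_derivative (\<Sum>p\<le>n. along u (c p) x * (\<Sum>d\<le>n-p.
      J_term ep (\<lambda>d. along u (vx d)) (\<lambda>d. along u (ddx (vx d))) (\<lambda>p. along u (c p))
        (\<lambda>p. along u (ddx (c p))) (\<lambda>p. along u (ddx (ddx (ddx (c p))))) d (n-p-d) x))) (at x)"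
    unfolding Q_def
    by (intro has_real_derivative_quad_coeff has_real_derivative_dval[OF adm]
        fields_below_ddx fbc fb)
  moreover have "Q = (\<lambda>y. if n = 0 then \<kappa> / 2 else 0)"
  proof
    fix y
    show "Q y = (if n = 0 then \<kappa> / 2 else 0)"
      unfolding Q_def c_def using fb ep0 K[of y] \<kappa>[of y] by (rule quad_coeff_lenard_seq)
  qed
  ultimately show "(\<Sum>p\<le>n. along u (c p) x * (\<Sum>d\<le>n-p. J_term ep (\<lambda>d. along u (vx d))
      (\<lambda>d. along u (ddx (vx d))) (\<lambda>p. along u (c p)) (\<lambda>p. along u (ddx (c p)))
      (\<lambda>p. along u (ddx (ddx (ddx (c p))))) d (n - p - d) x)) = 0"
    using DERIV_unique DERIV_const by blast
next
  show "along u (c 0) x \<noteq> 0" using c0 by (simp add: c_def lenard_seq_0)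
qed

lemma sum_atMost_truncate:
  fixes F :: "nat \<Rightarrow> real"
  assumes "\<And>d. N < d \<Longrightarrow> F d = 0"
  shows "(\<Sum>d\<le>r. F d) = (\<Sum>d\<le>N. if d \<le> r then F d else 0)"
proof -
  have "(\<Sum>d\<le>r. F d) = (\<Sum>d\<le>min r N. F d)"
    using assms by (intro sum.mono_neutral_right) (auto, metis not_le)
  also have "\<dots> = (\<Sum>d\<in>{..N} \<inter> {d. d \<le> r}. F d)"
    by (rule sum.cong) auto
  finally show ?thesis
    by (simp add: sum.inter_restrict)
qed

text \<open>\<open>pos_eps\<close>, \<open>pos_field\<close> are the coefficients \<open>\<epsilon>\<^sub>N\<^sub>-\<^sub>d\<close>, \<open>u\<^sub>N\<^sub>-\<^sub>d\<close> of the pencil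
  \<open>\<Sum>\<^sub>d J\<^sub>N\<^sub>-\<^sub>d \<lambda>\<^sup>d\<close> (its \<open>d = 0\<close> term is \<open>J\<^sub>N = -\<partial>\<close>), and \<open>neg_eps\<close>, \<open>neg_field\<close> those of the
  reversed pencil \<open>\<Sum>\<^sub>d J\<^sub>d \<lambda>\<^sup>d\<close>. The series start at the nonzero entries \<open>2\<close> of \<open>\<gamma>\<^sub>0\<close> and
  \<open>u\<^sub>0\<^sup>-\<^sup>1\<^sup>/\<^sup>2\<close> of \<open>\<gamma>\<^sub>-\<^sub>1\<close>, and \<open>gamma_expr n\<close> is the sequence \<open>a\<^sub>n\<close> of all windows,
  vanishing for \<open>-N < n < 0\<close>.\<close>

definition pos_eps :: "nat \<Rightarrow> (nat \<Rightarrow> real) \<Rightarrow> nat \<Rightarrow> real" where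
  "pos_eps N eps d = (if d = 0 \<or> N < d then 0 else eps (N - d))"

definition pos_field :: "nat \<Rightarrow> nat \<Rightarrow> dexpr" where
  "pos_field N d = (if d = 0 then DConst (-1) else if d \<le> N then DJet (N - d) 0 else DConst 0)"

definition neg_eps :: "nat \<Rightarrow> (nat \<Rightarrow> real) \<Rightarrow> nat \<Rightarrow> real" where
  "neg_eps N eps d = (if d \<le> N then eps d else 0)"

definition neg_field :: "nat \<Rightarrow> nat \<Rightarrow> dexpr" where
  "neg_field N d = (if d < N then DJet d 0 else if d = N then DConst (-1) else DConst 0)"

definition pos_seq :: "nat \<Rightarrow> (nat \<Rightarrow> real) \<Rightarrow> nat \<Rightarrow> dexpr" where
  "pos_seq N eps = lenard_seq (pos_eps N eps) (pos_field N) (DConst 2) (DConst (1/2))"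

definition neg_seq :: "nat \<Rightarrow> (nat \<Rightarrow> real) \<Rightarrow> nat \<Rightarrow> dexpr" where
  "neg_seq N eps =
     lenard_seq (neg_eps N eps) (neg_field N) (DInvSqrtPow 1) (DMult (DConst (-1)) (DInvSqrtPow 1))"

definition gamma_expr :: "nat \<Rightarrow> (nat \<Rightarrow> real) \<Rightarrow> int \<Rightarrow> dexpr" where
  "gamma_expr N eps n = (if n \<ge> 0 then pos_seq N eps (nat n)
     else if n > - int N then DConst 0 else neg_seq N eps (nat (- int N - n)))"

lemma fields_below_pos_seq: "fields_below N (pos_seq N eps n)"
  unfolding pos_seq_def by (rule fields_below_lenard_seq) (auto simp: pos_field_def)

lemma fields_below_neg_seq: "0 < N \<Longrightarrow> fields_below N (neg_seq N eps n)"
  unfolding neg_seq_def by (rule fields_below_lenard_seq) (auto simp: neg_field_def)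

lemma fields_below_gamma_expr: "0 < N \<Longrightarrow> fields_below N (gamma_expr N eps n)"
  by (simp add: gamma_expr_def fields_below_pos_seq fields_below_neg_seq)

lemma Jop_zero: "admissible N u \<Longrightarrow> i < N \<Longrightarrow> Jop N eps u i (\<lambda>x. 0) x = 0"
  using Jop_along[of N u "DConst 0" i eps x] by simp

definition pos_J :: "nat \<Rightarrow> (nat \<Rightarrow> real) \<Rightarrow> (nat \<Rightarrow> real \<Rightarrow> real) \<Rightarrow> nat \<Rightarrow> nat \<Rightarrow> real \<Rightarrow> real"
  where "pos_J N eps u = J_term (pos_eps N eps) (\<lambda>d. along u (pos_field N d))
    (\<lambda>d. along u (ddx (pos_field N d))) (\<lambda>p. along u (pos_seq N eps p))
    (\<lambda>p. along u (ddx (pos_seq N eps p))) (\<lambda>p. along u (ddx (ddx (ddx (pos_seq N eps p)))))"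

definition neg_J :: "nat \<Rightarrow> (nat \<Rightarrow> real) \<Rightarrow> (nat \<Rightarrow> real \<Rightarrow> real) \<Rightarrow> nat \<Rightarrow> nat \<Rightarrow> real \<Rightarrow> real"
  where "neg_J N eps u = J_term (neg_eps N eps) (\<lambda>d. along u (neg_field N d))
    (\<lambda>d. along u (ddx (neg_field N d))) (\<lambda>p. along u (neg_seq N eps p))
    (\<lambda>p. along u (ddx (neg_seq N eps p))) (\<lambda>p. along u (ddx (ddx (ddx (neg_seq N eps p)))))"

lemma pos_J_0: "pos_J N eps u 0 q x = - along u (ddx (pos_seq N eps q)) x"
  by (simp add: pos_J_def J_term_def pos_eps_def pos_field_def)

lemma neg_J_N: "eps N = 0 \<Longrightarrow> neg_J N eps u N q x = - along u (ddx (neg_seq N eps q)) x"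
  by (simp add: neg_J_def J_term_def neg_eps_def neg_field_def)

lemma pos_J_beyond: "N < d \<Longrightarrow> pos_J N eps u d q x = 0"
  by (simp add: pos_J_def J_term_def pos_eps_def pos_field_def)

lemma neg_J_beyond: "N < d \<Longrightarrow> neg_J N eps u d q x = 0"
  by (simp add: neg_J_def J_term_def neg_eps_def neg_field_def)

lemma pos_J_convolution:
  assumes "0 < N" "admissible N u"
  shows "(\<Sum>d\<le>r. pos_J N eps u d (r - d) x) = 0"
  unfolding pos_J_def pos_seq_def
  by (rule J_term_convolution_lenard_seq[OF assms(2), where \<kappa>="-4"]) (auto simp: pos_eps_def pos_field_def assms(1))

lemma neg_J_convolution:
  assumes N: "0 < N" and adm: "admissible N u" and "eps 0 = 0"
  shows "(\<Sum>d\<le>r. neg_J N eps u d (r - d) x) = 0"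
  unfolding neg_J_def neg_seq_def
proof (rule J_term_convolution_lenard_seq[OF adm, where \<kappa>=1])
  fix y
  have "0 < u 0 y"
    using adm by (simp add: admissible_def)
  then show "along u (DInvSqrtPow 1) y \<noteq> 0"
    and "along u (DMult (DConst (- 1)) (DInvSqrtPow 1)) y * along u (neg_field N 0) y
        * along u (DInvSqrtPow 1) y = - 1"
    and "along u (neg_field N 0) y * (along u (DInvSqrtPow 1) y)\<^sup>2 = 1"
    using N by (simp_all add: neg_field_def field_simps power2_eq_square)
qed (use assms in \<open>auto simp: neg_eps_def neg_field_def\<close>)

lemma Jop_gamma_expr_pos:
  assumes adm: "admissible N u" and j: "j \<in> {1..N}"
  shows "Jop N eps u (j - 1) (along u (gamma_expr N eps (int s - int N + int j))) x =
    (if N \<le> s + j then pos_J N eps u (N + 1 - j) (s + j - N) x else 0)"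
proof (cases "N \<le> s + j")
  case True
  then have "0 \<le> int s - int N + int j" and "nat (int s - int N + int j) = s + j - N"
    by (simp_all add: nat_eq_iff of_nat_diff)
  then have "gamma_expr N eps (int s - int N + int j) = pos_seq N eps (s + j - N)"
    by (simp only: gamma_expr_def if_True)
  moreover have "\<not> N < Suc N - j" "Suc N - j \<noteq> 0" "Suc N - j \<le> N" "N - (Suc N - j) = j - 1"
    and "j - 1 < N"
    using j by auto
  ultimately show ?thesis
    using True
    by (simp add: Jop_along[OF adm fields_below_pos_seq] pos_J_def J_term_def pos_eps_def pos_field_def)
next
  case False
  with j have "gamma_expr N eps (int s - int N + int j) = DConst 0"
    by (auto simp: gamma_expr_def)
  moreover have "j - 1 < N"
    using j by auto
  ultimately show ?thesis
    using False by (simp add: Jop_zero[OF adm])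
qed

lemma Jop_gamma_expr_neg:
  assumes N: "0 < N" and adm: "admissible N u" and j: "j \<in> {1..N}"
  shows "Jop N eps u (j - 1) (along u (gamma_expr N eps (- int s - 1 - int N + int j))) x =
    (if j - 1 \<le> s then neg_J N eps u (j - 1) (s - (j - 1)) x else 0)"
proof (cases "j - 1 \<le> s")
  case True
  with j have "\<not> 0 \<le> - int s - 1 - int N + int j" "\<not> - int N < - int s - 1 - int N + int j"
    and "nat (- int N - (- int s - 1 - int N + int j)) = s - (j - 1)"
    by (simp_all add: nat_eq_iff of_nat_diff)
  then have "gamma_expr N eps (- int s - 1 - int N + int j) = neg_seq N eps (s - (j - 1))"
    by (simp only: gamma_expr_def if_False)
  moreover have "j - 1 < N"
    using j by auto
  ultimately show ?thesis
    using True
    by (simp add: Jop_along[OF adm fields_below_neg_seq[OF N]] neg_J_def J_term_def neg_eps_def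
        neg_field_def)
next
  case False
  with j have "gamma_expr N eps (- int s - 1 - int N + int j) = DConst 0"
    by (auto simp: gamma_expr_def)
  moreover have "j - 1 < N"
    using j by auto
  ultimately show ?thesis
    using False by (simp add: Jop_zero[OF adm])
qed

lemma deriv_pos_seq:
  assumes N: "0 < N" and adm: "admissible N u"
  shows "deriv (along u (pos_seq N eps (Suc s))) x =
    (\<Sum>j=1..N. Jop N eps u (j - 1) (along u (gamma_expr N eps (int s - int N + int j))) x)"
proof -
  define h where "h d = (if d \<le> Suc s then pos_J N eps u d (Suc s - d) x else 0)" for d
  have "h 0 + (\<Sum>d=1..N. h d) = (\<Sum>d\<le>N. h d)"
    by (simp add: atMost_atLeast0 sum.atLeast_Suc_atMost)
  also have "\<dots> = (\<Sum>d\<le>Suc s. pos_J N eps u d (Suc s - d) x)"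
    unfolding h_def by (rule sum_atMost_truncate[symmetric]) (rule pos_J_beyond)
  also have "\<dots> = 0"
    by (rule pos_J_convolution[OF N adm])
  finally have "deriv (along u (pos_seq N eps (Suc s))) x = (\<Sum>d=1..N. h d)"
    by (simp add: h_def pos_J_0 deriv_dval[OF adm fields_below_pos_seq])
  also have "\<dots> = (\<Sum>j=1..N. h (N + 1 - j))"
    using sum.atLeastAtMost_rev[of h 1 N] by (simp add: add.commute)
  also have "\<dots> = (\<Sum>j=1..N. Jop N eps u (j - 1) (along u (gamma_expr N eps (int s - int N + int j))) x)"
  proof (rule sum.cong[OF refl])
    fix j
    assume "j \<in> {1..N}"
    then show "h (N + 1 - j) = Jop N eps u (j - 1) (along u (gamma_expr N eps (int s - int N + int j))) x"
      unfolding Jop_gamma_expr_pos[OF adm \<open>j \<in> {1..N}\<close>] by (auto simp: h_def Suc_diff_le)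
  qed
  finally show ?thesis .
qed

lemma deriv_neg_seq:
  assumes N: "0 < N" and adm: "admissible N u" and eps: "eps 0 = 0" "eps N = 0" and s: "1 \<le> s"
  shows "deriv (along u (gamma_expr N eps (- int s))) x =
    (\<Sum>j=1..N. Jop N eps u (j - 1) (along u (gamma_expr N eps (- int s - 1 - int N + int j))) x)"
proof -
  define h where "h d = (if d \<le> s then neg_J N eps u d (s - d) x else 0)" for d
  have "(\<Sum>k<N. h k) + h N = (\<Sum>d\<le>N. h d)"
    by (simp add: lessThan_Suc_atMost[symmetric])
  also have "\<dots> = (\<Sum>d\<le>s. neg_J N eps u d (s - d) x)"
    unfolding h_def by (rule sum_atMost_truncate[symmetric]) (rule neg_J_beyond)
  also have "\<dots> = 0"
    by (rule neg_J_convolution[where eps=eps, OF N adm eps(1)])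
  moreover have "h N = - deriv (along u (gamma_expr N eps (- int s))) x"
  proof (cases "N \<le> s")
    case True
    then have "gamma_expr N eps (- int s) = neg_seq N eps (s - N)"
      using s by (simp add: gamma_expr_def nat_diff_distrib)
    with True show ?thesis
      by (simp add: h_def neg_J_N[where N=N and eps=eps, OF eps(2)]
          deriv_dval[OF adm fields_below_neg_seq[OF N]])
  qed (use s in \<open>simp add: h_def gamma_expr_def\<close>)
  ultimately have "deriv (along u (gamma_expr N eps (- int s))) x = (\<Sum>k<N. h k)"
    by simp
  also have "\<dots> = (\<Sum>j=1..N. h (j - 1))"
    by (simp add: sum.atLeast1_atMost_eq)
  also have "\<dots> = (\<Sum>j=1..N. Jop N eps u (j - 1) (along u (gamma_expr N eps (- int s - 1 - int N + int j))) x)"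
  proof (rule sum.cong[OF refl])
    fix j
    assume "j \<in> {1..N}"
    then show "h (j - 1) =
        Jop N eps u (j - 1) (along u (gamma_expr N eps (- int s - 1 - int N + int j))) x"
      unfolding Jop_gamma_expr_neg[OF N adm \<open>j \<in> {1..N}\<close>] by (simp add: h_def)
  qed
  finally show ?thesis .
qed

lemma deriv_gamma_expr:
  assumes N: "0 < N" and adm: "admissible N u" and eps: "eps 0 = 0" "eps N = 0" and "n \<noteq> 0"
  shows "deriv (along u (gamma_expr N eps n)) x =
    (\<Sum>j=1..N. Jop N eps u (j - 1) (along u (gamma_expr N eps (n - 1 - int N + int j))) x)"
proof (cases "0 < n")
  case True
  then obtain s where n: "n = int (Suc s)"
    using zero_less_imp_eq_int by (metis gr0_conv_Suc)
  have "gamma_expr N eps (int (Suc s)) = pos_seq N eps (Suc s)"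
    unfolding gamma_expr_def by (simp only: nat_int of_nat_0_le_iff if_True)
  moreover have "int (Suc s) - 1 - int N + int j = int s - int N + int j" for j
    by simp
  ultimately show ?thesis
    unfolding n by (simp only:) (rule deriv_pos_seq[OF N adm])
next
  case False
  define s where "s = nat (- n)"
  have "n = - int s" "1 \<le> s"
    using False \<open>n \<noteq> 0\<close> by (auto simp: s_def)
  then show ?thesis
    using deriv_neg_seq[OF N adm eps, of s x] by simp
qed

definition gamma :: "nat \<Rightarrow> (nat \<Rightarrow> real) \<Rightarrow> int \<Rightarrow> nat \<Rightarrow> jet \<Rightarrow> real" where
  "gamma N eps s i = dval (gamma_expr N eps (s - int N + int i))"

lemma Rdag_rel_gamma:
  assumes "0 < N" "admissible N u" "eps 0 = 0" "eps N = 0" "s + 1 \<noteq> 0"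
  shows "Rdag_rel N eps u (\<lambda>i x. gamma N eps s i (jet_of u x)) (\<lambda>i x. gamma N eps (s + 1) i (jet_of u x))"
proof -
  have "s + 1 - int N + int i = s - int N + int (Suc i)" for i
    by simp
  moreover have "s + 1 - int N + int N = s + 1" and "s + 1 - 1 - int N + int j = s - int N + int j" for j
    by simp_all
  ultimately show ?thesis
    unfolding Rdag_rel_def gamma_def using deriv_gamma_expr[OF assms] by (simp only:) simp
qed

theorem mainTheorem7:
  fixes N :: nat and eps :: "nat \<Rightarrow> real"
  assumes "N \<ge> 1" and "eps 0 = 0" and "eps N = 0"
  shows "\<exists>\<Gamma> :: int \<Rightarrow> nat \<Rightarrow> jet \<Rightarrow> real.
     (\<forall>s. \<forall>i\<in>{1..N}. local_fun N (\<Gamma> s i)) \<and>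
     (\<forall>i\<in>{1..N}. \<Gamma> 0 i = (\<lambda>j. if i = N then 2 else 0)) \<and>
     (\<forall>i\<in>{1..N}. \<Gamma> (-1) i = (\<lambda>j. if i = 1 then 1 / sqrt (j 0 0) else 0)) \<and>
     (\<forall>u. admissible N u \<longrightarrow>
        (\<forall>s. \<forall>i\<in>{1..N}. smooth_fun (\<lambda>x. \<Gamma> s i (jet_of u x))) \<and>
        (\<forall>s::int. s \<ge> 0 \<longrightarrow>
           Rdag_rel N eps u (\<lambda>i x. \<Gamma> s i (jet_of u x)) (\<lambda>i x. \<Gamma> (s + 1) i (jet_of u x))) \<and>
        (\<forall>s::int. s \<ge> 1 \<longrightarrow>
           Rdag_rel N eps u (\<lambda>i x. \<Gamma> (- s - 1) i (jet_of u x)) (\<lambda>i x. \<Gamma> (- s) i (jet_of u x))))"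
proof (intro exI[of _ "gamma N eps"] conjI allI ballI impI)
  have N: "0 < N"
    using assms(1) by simp
  show "local_fun N (gamma N eps s i)" for s i
    unfolding gamma_def by (rule local_fun_dval[OF fields_below_gamma_expr[OF N]])
  show "gamma N eps 0 i = (\<lambda>j. if i = N then 2 else 0)" if "i \<in> {1..N}" for i
    using that by (auto simp: gamma_def gamma_expr_def pos_seq_def lenard_seq_0 fun_eq_iff)
  show "gamma N eps (-1) i = (\<lambda>j. if i = 1 then 1 / sqrt (j 0 0) else 0)" if "i \<in> {1..N}" for i
    using that by (auto simp: gamma_def gamma_expr_def neg_seq_def lenard_seq_0 divide_inverse fun_eq_iff)
  show "smooth_fun (\<lambda>x. gamma N eps s i (jet_of u x))" if "admissible N u" for u s i
    unfolding gamma_def by (rule smooth_fun_dval[OF that fields_below_gamma_expr[OF N]])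
  show "Rdag_rel N eps u (\<lambda>i x. gamma N eps s i (jet_of u x)) (\<lambda>i x. gamma N eps (s + 1) i (jet_of u x))"
    if "admissible N u" "s \<ge> 0" for u and s :: int
    using that by (intro Rdag_rel_gamma[OF N _ assms(2,3)]) auto
  show "Rdag_rel N eps u (\<lambda>i x. gamma N eps (- s - 1) i (jet_of u x))
      (\<lambda>i x. gamma N eps (- s) i (jet_of u x))"
    if "admissible N u" "s \<ge> 1" for u and s :: int
    using Rdag_rel_gamma[OF N that(1) assms(2,3), of "- s - 1"] that(2) by simp
qed

end
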